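(* Assume $q \in V_0$ and, for each $i\in\{1,2\}$, $q\bmod n_i$ is a quadratic residue modulo $n_i$. For $(i,j,h)\in\{0,1\}^3$ let $\mathcal{V}_{(i,j,h)}$ be the cyclic code of length $n$ over $\mathrm{GF}(q)$ with generator polynomial $v_i(x)d_j^{(n_1)}(x)d_h^{(n_2)}(x)$. Then each $\mathcal{V}_{(i,j,h)}$ has length $n$ and dimension $(n+1)/2$, and its minimum odd-like weight $d_{(i,j,h)}$ satisfies $d_{(i,j,h)}\ge\sqrt n$. Moreover, if $n_1\equiv -1\pmod 8$ and $n_2\equiv -1\pmod 8$, then $d_{(i,j,h)}^2-d_{(i,j,h)}+1\ge n$.
   Context: Let $n_1,n_2$ be distinct odd primes, $n=n_1n_2$, and let $q$ be a prime power with $\gcd(q,n)=1$. Let $d=\gcd(n_1-1,n_2-1)$ and $e=(n_1-1)(n_2-1)/d$. Let $g_1,g_2$ be primitive roots modulo $n_1,n_2$ respectively, let $g$ be the integer modulo $n$ with $g\equiv g_1 \pmod{n_1}$, $g\equiv g_2\pmod{n_2}$, and let $\nu$ be the integer modulo $n$ with $\nu\equiv g\pmod{n_1}$, $\nu\equiv 1\pmod{n_2}$. It is known that every element of $\mathbb{Z}_n^*$ can be written uniquely as $g^s\nu^i$ with $0\le s\le e-1$, $0\le i\le d-1$. Define $V_0=\{g^s\nu^i: 0\le s\le e-1,\ 0\le i\le d-1,\ s+i\text{ even}\}$ and $V_1=\{g^s\nu^i: 0\le s\le e-1,\ 0\le i\le d-1,\ s+i\text{ odd}\}$. For $j\in\{1,2\}$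 let $D_0^{(n_j)}$, $D_1^{(n_j)}$ be the sets of quadratic residues and nonresidues modulo $n_j$. Let $N=\mathrm{ord}_n(q)$ and $\theta$ a primitive $n$-th root of unity in $\mathrm{GF}(q^N)$. Define $v_i(x)=\prod_{j\in V_i}(x-\theta^j)$, $d_i^{(n_1)}(x)=\prod_{j\in D_i^{(n_1)}}(x-\theta^{n_2 j})$, $d_i^{(n_2)}(x)=\prod_{j\in D_i^{(n_2)}}(x-\theta^{n_1 j})$ for $i\in\{0,1\}$; under the hypotheses these lie in $\mathrm{GF}(q)[x]$. Cyclic codes of length $n$ are identified with ideals of $\mathrm{GF}(q)[x]/(x^n-1)$. A codeword $(c_0,\dots,c_{n-1})$ is odd-like if $\sum_i c_i\neq 0$; the minimum odd-like weight is the minimum Hamming weight of odd-like codewords. *)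

theory Defs
  imports "HOL-Number_Theory.Number_Theory" "HOL-Computational_Algebra.Polynomial"
begin

definition Vset :: "nat \<Rightarrow> nat \<Rightarrow> nat \<Rightarrow> nat \<Rightarrow> nat \<Rightarrow> nat \<Rightarrow> nat set" where
  "Vset n g nu d e i = {(g ^ s * nu ^ k) mod n | s k. s < e \<and> k < d \<and> (s + k) mod 2 = i}"

definition Dset :: "nat \<Rightarrow> nat \<Rightarrow> nat set" where
  "Dset p i = {x. 0 < x \<and> x < p \<and> Legendre (int x) (int p) = (if i = 0 then 1 else -1)}"

definition root_prod :: "'b::field \<Rightarrow> nat \<Rightarrow> nat set \<Rightarrow> 'b poly" where
  "root_prod theta m S = (\<Prod>j\<in>S. [:- (theta ^ (m * j)), 1:])"

text \<open>Cyclic code of length n generated by G: the ideal (G) in GF(q)[x]/(x^n - 1),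
  codewords represented by their reduced representatives (degree < n).\<close>
definition cyclic_code :: "nat \<Rightarrow> 'a::field poly \<Rightarrow> 'a poly set" where
  "cyclic_code n G = {(a * G) mod (monom 1 n - 1) | a. True}"

definition code_dim :: "'a::field poly set \<Rightarrow> nat" where
  "code_dim C = vector_space.dim (smult :: 'a \<Rightarrow> 'a poly \<Rightarrow> 'a poly) C"

definition hamming_wt :: "nat \<Rightarrow> 'a::zero poly \<Rightarrow> nat" where
  "hamming_wt n c = card {i. i < n \<and> coeff c i \<noteq> 0}"

definition odd_like :: "nat \<Rightarrow> 'a::comm_monoid_add poly \<Rightarrow> bool" where
  "odd_like n c \<longleftrightarrow> (\<Sum>i<n. coeff c i) \<noteq> 0"

definition min_odd_like_weight :: "nat \<Rightarrow> 'a::field poly set \<Rightarrow> nat" where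
  "min_odd_like_weight n C = Min {hamming_wt n c | c. c \<in> C \<and> odd_like n c}"

end

theory Submission
  imports Defs "HOL-Library.Cardinality"
begin

text \<open>
  The zeros of the generator $v_i(x) d_j^{(n_1)}(x) d_h^{(n_2)}(x)$ are $\theta^k$ for $k$ in a set
  $Z \subseteq \{1, \dots, n-1\}$. The proof has three independent parts:
  \<^item> Coding theory: if $Z$ is closed under multiplication by $q$, the product of the
    $x - \theta^k$ descends to $\mathrm{GF}(q)$ (its coefficients are fixed by Frobenius), the code
    has dimension $n - |Z|$, and if $Z \cup a^{-1} Z$ contains all nonzero residues, then for an
    odd-like codeword $c$ the polynomial with coefficients $\sum_{(i + aj) \bmod n = t} c_i c_j$
    vanishes at all nontrivial $n$-th roots of unity but not at $1$, so it is a nonzero multiple of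
    $1 + x + \dots + x^{n-1}$. Hence every residue is some $(i + aj) \bmod n$ with $i, j$ in the
    support of $c$, giving $n \le w^2$, and $n \le w^2 - w + 1$ when $a = n - 1$.
  \<^item> Number theory: $V_0, V_1$ are the units whose quadratic character modulo $n_1$ is $\pm 1$;
    so $Z$ has $(n-1)/2$ elements, is closed under the square $q$, and is swapped with its
    complement by $g$, and by $n - 1$ when $n_1 \equiv n_2 \equiv -1 \pmod 8$.
  \<^item> The main theorem combines both, taking $a = g$ and $a = n - 1$.
\<close>

subsection \<open>Maps preserving sums, products and one\<close>

text \<open>Both the embedding $\mathrm{GF}(q) \to \mathrm{GF}(q^N)$ and the Frobenius map
  $y \mapsto y^q$ of $\mathrm{GF}(q^N)$ are such maps; they act coefficientwise on polynomials.\<close>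
locale ring_map =
  fixes f :: "'a::comm_ring_1 \<Rightarrow> 'b::comm_ring_1"
  assumes map_add: "f (x + y) = f x + f y"
    and map_mult: "f (x * y) = f x * f y"
    and map_one: "f 1 = 1"
begin

lemma map_zero: "f 0 = 0"
  using map_add[of 0 0] by simp

lemma map_diff: "f (x - y) = f x - f y"
  using map_add[of "x - y" y] by (simp add: algebra_simps)

lemma map_power: "f (x ^ k) = f x ^ k"
  by (induction k) (simp_all add: map_one map_mult)

lemma map_of_nat: "f (of_nat k) = of_nat k"
  by (induction k) (simp_all add: map_zero map_one map_add)

lemma map_sum: "f (sum g A) = (\<Sum>a\<in>A. f (g a))"
  by (induction A rule: infinite_finite_induct) (simp_all add: map_zero map_add)

lemma coeff_map: "coeff (map_poly f p) i = f (coeff p i)"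
  by (simp add: coeff_map_poly map_zero)

lemma map_poly_diff: "map_poly f (p - r) = map_poly f p - map_poly f r"
  by (rule poly_eqI) (simp add: coeff_map map_diff)

lemma map_poly_mult: "map_poly f (p * r) = map_poly f p * map_poly f r"
  by (rule poly_eqI) (simp add: coeff_map coeff_mult map_sum map_mult)

lemma map_poly_prod: "map_poly f (prod g A) = (\<Prod>a\<in>A. map_poly f (g a))"
  by (induction A rule: infinite_finite_induct) (simp_all add: map_one map_poly_mult)

lemma map_poly_linear: "map_poly f [:- a, 1:] = [:- f a, 1:]"
  using map_diff[of 0 a] by (simp add: map_poly_pCons map_zero map_one)

lemma map_poly_dvd: "p dvd r \<Longrightarrow> map_poly f p dvd map_poly f r"
  by (auto simp: map_poly_mult elim!: dvdE)

end

subsection \<open>Finite fields\<close>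

text \<open>Every element of a finite field with $q$ elements satisfies $x^q = x$: multiplication by
  a nonzero $x$ permutes the nonzero elements, so their product is unchanged, giving $x^{q-1} = 1$.\<close>
lemma finite_field_power_card:
  fixes x :: "'a::{field,finite}"
  shows "x ^ CARD('a) = x"
proof (cases "x = 0")
  case True
  then show ?thesis by (simp add: finite_UNIV_card_ge_0)
next
  case False
  define U where "U = UNIV - {0 :: 'a}"
  have "bij_betw (\<lambda>y. x * y) U U"
    by (rule bij_betw_byWitness[of _ "\<lambda>y. y / x"]) (auto simp: U_def False)
  then have "(\<Prod>y\<in>U. x * y) = (\<Prod>y\<in>U. y)"
    by (rule prod.reindex_bij_betw)
  moreover have "(\<Prod>y\<in>U. x * y) = x ^ card U * (\<Prod>y\<in>U. y)"
    by (simp add: prod.distrib)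
  moreover have "(\<Prod>y\<in>U. y) \<noteq> 0"
    by (simp add: U_def)
  ultimately have "x ^ card U = 1"
    by simp
  moreover have "CARD('a) = Suc (card U)"
    using finite_UNIV_card_ge_0[where 'a='a] by (simp add: U_def card_Diff_singleton)
  ultimately show ?thesis
    by simp
qed

lemma card_field_ge_2: "CARD('a::{field,finite}) \<ge> 2"
  using card_mono[of "UNIV :: 'a set" "{0, 1}"] by simp

text \<open>In a field with $q$ elements the binomial coefficients $\binom{q}{k}$, $0 < k < q$, vanish:
  $\sum_{0<k<q} \binom{q}{k} x^k = (x+1)^q - x^q - 1$ is a polynomial of degree less than $q$
  with $q$ roots.\<close>
lemma finite_field_binomial_vanishes:
  assumes "0 < k" "k < CARD('a::{field,finite})"
  shows "(of_nat (CARD('a) choose k) :: 'a) = 0"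
proof -
  define q where "q = CARD('a)"
  define D :: "'a poly" where "D = (\<Sum>j\<in>{1..<q}. monom (of_nat (q choose j)) j)"
  have coeff_D: "coeff D j = (if j \<in> {1..<q} then of_nat (q choose j) else 0)" for j
    by (simp add: D_def coeff_sum coeff_monom)
  have "q \<ge> 2"
    using card_field_ge_2[where 'a='a] by (simp add: q_def)
  have deg_D: "degree D < q"
    using \<open>q \<ge> 2\<close> by (intro le_less_trans[OF degree_le[of "q - 1"]]) (auto simp: coeff_D)
  have "poly D x = (x + 1) ^ q - x ^ q - 1" for x
  proof -
    have "(x + 1) ^ q = (\<Sum>j\<in>insert 0 (insert q {1..<q}). of_nat (q choose j) * x ^ j)"
      by (subst binomial_ring) (intro sum.cong, auto)
    also have "\<dots> = 1 + x ^ q + (\<Sum>j\<in>{1..<q}. of_nat (q choose j) * x ^ j)"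
      using \<open>q \<ge> 2\<close> by simp
    finally show ?thesis
      by (simp add: D_def poly_sum poly_monom)
  qed
  then have roots: "poly D x = 0" for x
    by (simp add: q_def finite_field_power_card)
  have "D = 0"
  proof (rule ccontr)
    assume "D \<noteq> 0"
    then have "card {x. poly D x = 0} \<le> degree D"
      by (rule card_poly_roots_bound)
    with roots deg_D show False
      by (simp add: q_def)
  qed
  then show ?thesis
    using coeff_D[of k] assms by (simp add: q_def)
qed

locale field_embedding = ring_map emb for emb :: "'a::{field,finite} \<Rightarrow> 'b::{field,finite}" +
  assumes emb_inj: "inj emb"
begin

lemma emb_eq_0_iff: "emb x = 0 \<longleftrightarrow> x = 0"
  using emb_inj map_zero by (metis injD)

lemma degree_map_emb: "degree (map_poly emb p) = degree p"
  by (rule degree_map_poly) (simp add: emb_eq_0_iff)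

lemma map_emb_eq_0_iff: "map_poly emb p = 0 \<longleftrightarrow> p = 0"
  by (rule map_poly_eq_0_iff) (simp_all add: map_zero emb_eq_0_iff)

lemma map_emb_dvd_iff: "map_poly emb p dvd map_poly emb r \<longleftrightarrow> p dvd r"
proof
  assume dvd: "map_poly emb p dvd map_poly emb r"
  show "p dvd r"
  proof (cases "p = 0")
    case True
    then show ?thesis
      using dvd by (simp add: map_emb_eq_0_iff)
  next
    case False
    have "map_poly emb (r mod p) = map_poly emb r - map_poly emb (r div p) * map_poly emb p"
      by (simp only: minus_div_mult_eq_mod[symmetric] map_poly_diff map_poly_mult)
    then have "map_poly emb p dvd map_poly emb (r mod p)"
      using dvd by simp
    have "r mod p = 0"
    proof (rule ccontr)
      assume nonzero: "r mod p \<noteq> 0"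
      then have "degree (r mod p) < degree p"
        by (rule degree_mod_less'[OF False])
      moreover have "degree p \<le> degree (r mod p)"
        using dvd_imp_degree[OF \<open>map_poly emb p dvd map_poly emb (r mod p)\<close>] nonzero False
        by (simp add: degree_map_emb map_emb_eq_0_iff)
      ultimately show False
        by simp
    qed
    then show ?thesis
      by (simp add: mod_eq_0_iff_dvd)
  qed
qed (rule map_poly_dvd)

lemma frobenius_add: "(y + z :: 'b) ^ CARD('a) = y ^ CARD('a) + z ^ CARD('a)"
proof -
  have "(y + z) ^ CARD('a) = (\<Sum>k\<in>{0, CARD('a)}. of_nat (CARD('a) choose k) * y ^ k * z ^ (CARD('a) - k))"
    unfolding binomial_ring
  proof (intro sum.mono_neutral_right ballI)
    fix k assume "k \<in> {..CARD('a)} - {0, CARD('a)}"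
    then have "(of_nat (CARD('a) choose k) :: 'a) = 0"
      by (intro finite_field_binomial_vanishes) auto
    then have "(of_nat (CARD('a) choose k) :: 'b) = 0"
      using map_of_nat[of "CARD('a) choose k"] by (simp add: map_zero)
    then show "of_nat (CARD('a) choose k) * y ^ k * z ^ (CARD('a) - k) = 0"
      by simp
  qed auto
  then show ?thesis
    using card_field_ge_2[where 'a='a] by (simp add: add.commute)
qed

sublocale frobenius: ring_map "\<lambda>y :: 'b. y ^ CARD('a)"
  by unfold_locales (simp_all add: frobenius_add power_mult_distrib)

lemma frobenius_inj: "inj (\<lambda>y :: 'b. y ^ CARD('a))"
proof (rule injI)
  fix y z :: 'b
  assume "y ^ CARD('a) = z ^ CARD('a)"
  then have "(y - z) ^ CARD('a) = 0"
    by (simp add: frobenius.map_diff)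
  then show "y = z"
    by simp
qed

text \<open>The image of $\mathrm{GF}(q)$ consists exactly of the fixed points of the Frobenius map,
  since $y^q = y$ has at most $q$ solutions.\<close>
lemma range_emb: "range emb = {y. y ^ CARD('a) = y}"
proof (rule card_subset_eq)
  show "range emb \<subseteq> {y. y ^ CARD('a) = y}"
    by (auto simp flip: map_power simp: finite_field_power_card)
  define R :: "'b poly" where "R = monom 1 CARD('a) + [:0, - 1:]"
  have "degree R = CARD('a)"
    using card_field_ge_2[where 'a='a] unfolding R_def
    using degree_add_eq_left[of "[:0, - 1:]" "monom (1 :: 'b) CARD('a)"]
    by (simp add: degree_monom_eq)
  moreover have "{y. y ^ CARD('a) = y} = {y. poly R y = 0}"
    by (simp add: R_def poly_monom)
  ultimately have "card {y. y ^ CARD('a) = (y :: 'b)} \<le> CARD('a)"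
    using card_poly_roots_bound[of R] card_field_ge_2[where 'a='a] by fastforce
  moreover have "card (range emb) = CARD('a)"
    using emb_inj by (simp add: card_image)
  moreover have "card (range emb) \<le> card {y. y ^ CARD('a) = (y :: 'b)}"
    using \<open>range emb \<subseteq> _\<close> by (intro card_mono) auto
  ultimately show "card (range emb) = card {y. y ^ CARD('a) = (y :: 'b)}"
    by simp
qed simp

lemma root_product_descends:
  assumes "finite R" "(\<lambda>y. y ^ CARD('a)) ` R \<subseteq> R"
  shows "\<exists>G. map_poly emb G = (\<Prod>a\<in>R. [:- a, 1:])"
proof -
  define P where "P = (\<Prod>a\<in>R. [:- a, 1:])"
  have "(\<lambda>y. y ^ CARD('a)) ` R = R"
    using assms by (intro card_subset_eq) (auto simp: card_image inj_on_subset[OF frobenius_inj])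
  then have "map_poly (\<lambda>y. y ^ CARD('a)) P = P"
    unfolding P_def frobenius.map_poly_prod frobenius.map_poly_linear
    using prod.reindex[OF inj_on_subset[OF frobenius_inj], of R "\<lambda>a. [:- a, 1:]"] by simp
  then have "coeff P i \<in> range emb" for i
    using frobenius.coeff_map[of P i] by (simp add: range_emb)
  then have "map_poly (emb \<circ> inv_into UNIV emb) P = P"
    by (intro map_poly_idI) (auto simp: coeffs_def f_inv_into_f split: if_splits)
  then have "map_poly emb (map_poly (inv_into UNIV emb) P) = P"
    by (subst map_poly_map_poly) (simp_all add: inv_f_eq[OF emb_inj] map_zero)
  then show ?thesis
    unfolding P_def by blast
qed

end

subsection \<open>Roots of unity and the weight bound\<close>

lemma linear_factors_dvd:
  fixes p :: "'a::field poly"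
  assumes "finite I" "inj_on r I" "\<And>i. i \<in> I \<Longrightarrow> poly p (r i) = 0"
  shows "(\<Prod>i\<in>I. [:- r i, 1:]) dvd p"
  using assms
proof (induction I arbitrary: p rule: finite_induct)
  case (insert i I)
  have "[:- r i, 1:] dvd p"
    using insert.prems(2)[of i] by (simp add: poly_eq_0_iff_dvd)
  then obtain s where s: "p = [:- r i, 1:] * s"
    by (elim dvdE)
  have "poly s (r j) = 0" if "j \<in> I" for j
  proof -
    have "r j \<noteq> r i"
      using insert.prems(1) insert.hyps(2) that by (auto simp: inj_on_def)
    then show ?thesis
      using insert.prems(2)[of j] that by (simp add: s)
  qed
  then have "(\<Prod>i\<in>I. [:- r i, 1:]) dvd s"
    using insert.IH insert.prems(1) by (simp add: inj_on_insert)
  then show ?case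
    by (simp only: prod.insert[OF insert.hyps] s) (rule mult_dvd_mono[OF dvd_refl])
qed simp

lemma geometric_poly: "[:- 1, 1:] * (\<Sum>i<n. monom 1 i) = monom 1 n - (1 :: 'a::comm_ring_1 poly)"
proof (induction n)
  case (Suc n)
  have "[:- 1, 1:] * monom (1 :: 'a) n = monom 1 (Suc n) - monom 1 n"
    by (simp add: monom_Suc algebra_simps)
  with Suc show ?case
    by (simp add: distrib_left)
qed simp

lemma card_image_pairs_diagonal:
  assumes "finite S" and "\<And>i. i \<in> S \<Longrightarrow> f (i, i) = z"
  shows "card (f ` (S \<times> S)) \<le> card S * card S - card S + 1"
proof -
  define D where "D = (\<lambda>i. (i, i)) ` S"
  have "f ` (S \<times> S) \<subseteq> insert z (f ` (S \<times> S - D))"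
    using assms(2) by (auto simp: D_def)
  then have "card (f ` (S \<times> S)) \<le> card (insert z (f ` (S \<times> S - D)))"
    using assms(1) by (intro card_mono) auto
  also have "\<dots> \<le> card (S \<times> S - D) + 1"
    using assms(1) card_image_le[of "S \<times> S - D" f] card_insert_le_m1 by (simp add: card_insert_if)
  also have "card (S \<times> S - D) = card S * card S - card S"
    using assms(1) by (subst card_Diff_subset) (auto simp: D_def card_image inj_on_def card_cartesian_product)
  finally show ?thesis .
qed

lemma poly_as_sum_below:
  fixes p :: "'a::comm_semiring_1 poly"
  assumes "degree p < n"
  shows "poly p x = (\<Sum>i<n. coeff p i * x ^ i)"
  unfolding poly_altdef using assms
  by (intro sum.mono_neutral_left) (auto simp: coeff_eq_0)

locale root_of_unity =
  fixes theta :: "'b::field" and n :: nat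
  assumes n_pos: "0 < n"
    and theta_pow_n: "theta ^ n = 1"
    and theta_pow_neq_1: "\<And>k. 0 < k \<Longrightarrow> k < n \<Longrightarrow> theta ^ k \<noteq> 1"
begin

lemma theta_pow_mod: "theta ^ k = theta ^ (k mod n)"
proof -
  have "theta ^ k = (theta ^ n) ^ (k div n) * theta ^ (k mod n)"
    by (simp flip: power_mult power_add)
  then show ?thesis
    by (simp add: theta_pow_n)
qed

lemma theta_pow_pow_n: "(theta ^ k) ^ n = 1"
  by (metis power_mult mult.commute power_one theta_pow_n)

lemma theta_pow_inj: "inj_on (\<lambda>k. theta ^ k) {..<n}"
proof (rule inj_onI)
  have pow_diff: "theta ^ (l - k) = 1" if "k \<le> l" "theta ^ k = theta ^ l" for k l
  proof -
    have "theta \<noteq> 0"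
      using theta_pow_n n_pos by (auto simp: power_0_left)
    moreover have "theta ^ l = theta ^ k * theta ^ (l - k)"
      using that(1) by (simp flip: power_add)
    ultimately show ?thesis
      using that(2) by simp
  qed
  have no_smaller: False if "k < l" "l < n" "theta ^ k = theta ^ l" for k l
    using pow_diff[of k l] theta_pow_neq_1[of "l - k"] that by simp
  fix k l assume "k \<in> {..<n}" "l \<in> {..<n}" "theta ^ k = theta ^ l"
  then show "k = l"
    using no_smaller[of k l] no_smaller[of l k] by (metis lessThan_iff linorder_neqE_nat)
qed

lemma prod_roots_of_unity: "(\<Prod>k<n. [:- (theta ^ k), 1:]) = monom 1 n - 1"
proof -
  define Q where "Q = (\<Prod>k<n. [:- (theta ^ k), 1:])"
  have "Q dvd monom 1 n - 1"
    unfolding Q_def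
    by (rule linear_factors_dvd) (simp_all add: theta_pow_inj poly_monom theta_pow_pow_n)
  then obtain v where v: "monom 1 n - 1 = Q * v"
    by (elim dvdE)
  have deg_X: "degree (monom 1 n - 1 :: 'b poly) = n"
    using degree_add_eq_left[of "- 1" "monom (1 :: 'b) n"] n_pos by (simp add: degree_monom_eq)
  have "Q \<noteq> 0" "degree Q = n"
    by (simp_all add: Q_def degree_prod_eq_sum_degree)
  moreover have "v \<noteq> 0"
    using v deg_X n_pos by auto
  ultimately have "degree v = 0"
    using v deg_X by (simp add: degree_mult_eq)
  then obtain u where u: "v = [:u:]"
    by (elim degree_eq_zeroE)
  have "lead_coeff Q = 1"
    by (simp add: Q_def lead_coeff_prod)
  moreover have "lead_coeff (monom 1 n - 1 :: 'b poly) = 1"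
    using n_pos by (simp add: deg_X)
  ultimately have "u = 1"
    using v u by (cases "u = 0") (simp_all add: lead_coeff_mult)
  then show ?thesis
    using u v by (simp add: Q_def)
qed

lemma prod_nontrivial_roots_of_unity: "(\<Prod>k\<in>{1..<n}. [:- (theta ^ k), 1:]) = (\<Sum>i<n. monom 1 i)"
proof -
  have "(\<Prod>k<n. [:- (theta ^ k), 1:]) = [:- (theta ^ 0), 1:] * (\<Prod>k\<in>{1..<n}. [:- (theta ^ k), 1:])"
    using n_pos by (simp only: atLeast0LessThan[symmetric] prod.atLeast_Suc_lessThan One_nat_def)
  then have "[:- 1, 1:] * (\<Prod>k\<in>{1..<n}. [:- (theta ^ k), 1:]) = [:- 1, 1:] * (\<Sum>i<n. monom 1 i)"
    using prod_roots_of_unity geometric_poly[of n, where 'a='b] by simp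
  then show ?thesis
    by (subst (asm) mult_left_cancel) simp_all
qed

lemma vanishing_at_nontrivial_roots:
  fixes r :: "'b poly"
  assumes "degree r < n" and "\<And>m. 0 < m \<Longrightarrow> m < n \<Longrightarrow> poly r (theta ^ m) = 0"
  shows "\<exists>u. r = smult u (\<Sum>i<n. monom 1 i)"
proof (cases "r = 0")
  case False
  have "inj_on (\<lambda>k. theta ^ k) {1..<n}"
    by (rule inj_on_subset[OF theta_pow_inj]) auto
  then have "(\<Prod>k\<in>{1..<n}. [:- (theta ^ k), 1:]) dvd r"
    using assms(2) by (intro linear_factors_dvd) auto
  then have "(\<Sum>i<n. monom 1 i) dvd r"
    by (simp only: prod_nontrivial_roots_of_unity)
  then obtain v where v: "r = (\<Sum>i<n. monom 1 i) * v"
    by (elim dvdE)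
  have "degree (\<Sum>i<n. monom (1 :: 'b) i) = n - 1"
    by (simp flip: prod_nontrivial_roots_of_unity add: degree_prod_eq_sum_degree)
  moreover have "v \<noteq> 0" "(\<Sum>i<n. monom (1 :: 'b) i) \<noteq> 0"
    using v False by auto
  ultimately have "degree v = 0"
    using v assms(1) degree_mult_eq[of "\<Sum>i<n. monom (1 :: 'b) i" v] by simp
  then obtain u where "v = [:u:]"
    by (elim degree_eq_zeroE)
  then show ?thesis
    using v by auto
qed simp

text \<open>For a word $c$ of length $n$ with support $S$, the polynomial
  $\sum_{i,j \in S} c_i c_j x^{(i + aj) \bmod n}$ is $c(x) c(x^a)$ reduced modulo $x^n - 1$.\<close>
definition twisted_square :: "nat \<Rightarrow> 'b poly \<Rightarrow> 'b poly" where
  "twisted_square a c = (\<Sum>(i, j)\<in>{i. i < n \<and> coeff c i \<noteq> 0} \<times> {i. i < n \<and> coeff c i \<noteq> 0}.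
     monom (coeff c i * coeff c j) ((i + a * j) mod n))"

lemma coeff_twisted_square:
  "coeff (twisted_square a c) t = (\<Sum>(i, j)\<in>{i. i < n \<and> coeff c i \<noteq> 0} \<times> {i. i < n \<and> coeff c i \<noteq> 0}.
     if (i + a * j) mod n = t then coeff c i * coeff c j else 0)"
  unfolding twisted_square_def coeff_sum by (simp add: coeff_monom case_prod_beta)

lemma degree_twisted_square: "degree (twisted_square a c) < n"
proof -
  have "coeff (twisted_square a c) t = 0" if "n \<le> t" for t
  proof -
    have "(i + a * j) mod n \<noteq> t" for i j
      using mod_less_divisor[OF n_pos, of "i + a * j"] that by linarith
    then show ?thesis
      unfolding coeff_twisted_square by (intro sum.neutral) (simp add: case_prod_beta)
  qed
  then show ?thesis
    using n_pos by (intro le_less_trans[OF degree_le[of "n - 1"]]) auto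
qed

lemma poly_twisted_square:
  assumes "degree c < n"
  shows "poly (twisted_square a c) (theta ^ m) = poly c (theta ^ m) * poly c (theta ^ (a * m))"
proof -
  define S where "S = {i. i < n \<and> coeff c i \<noteq> 0}"
  have poly_c: "poly c z = (\<Sum>i\<in>S. coeff c i * z ^ i)" for z
    unfolding poly_as_sum_below[OF assms] S_def by (intro sum.mono_neutral_right) auto
  have "(theta ^ m) ^ ((fst x + a * snd x) mod n) = (theta ^ m) ^ fst x * (theta ^ (a * m)) ^ snd x"
    for x :: "nat \<times> nat"
  proof -
    have "(theta ^ m) ^ ((fst x + a * snd x) mod n) = theta ^ ((m * ((fst x + a * snd x) mod n)) mod n)"
      by (simp flip: power_mult theta_pow_mod)
    also have "\<dots> = theta ^ (m * fst x + (a * m) * snd x)"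
      by (simp add: mod_mult_right_eq algebra_simps flip: theta_pow_mod)
    finally show ?thesis
      by (simp add: power_add power_mult)
  qed
  then show ?thesis
    unfolding twisted_square_def S_def[symmetric]
    by (simp add: poly_sum poly_monom poly_c sum_product sum.cartesian_product case_prod_beta
        algebra_simps)
qed

text \<open>Then the twisted square
  of $c$ vanishes at all nontrivial $n$-th roots of unity but not at $1$, so all its $n$
  coefficients are nonzero: every residue mod $n$ is of the form $(i + aj) \bmod n$ with $i, j$
  in the support of $c$.\<close>
lemma support_sums_cover:
  fixes c :: "'b poly" and a :: nat
  defines "S \<equiv> {i. i < n \<and> coeff c i \<noteq> 0}"
  assumes deg: "degree c < n" and at_one: "poly c 1 \<noteq> 0"
    and roots: "\<And>m. 0 < m \<Longrightarrow> m < n \<Longrightarrow> poly c (theta ^ m) = 0 \<or> poly c (theta ^ (a * m)) = 0"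
  shows "{..<n} \<subseteq> (\<lambda>(i, j). (i + a * j) mod n) ` (S \<times> S)"
proof
  have vanish: "poly (twisted_square a c) (theta ^ m) = 0" if "0 < m" "m < n" for m
    using roots[OF that] by (auto simp: poly_twisted_square[OF deg])
  have "\<exists>u. twisted_square a c = smult u (\<Sum>i<n. monom 1 i)"
    by (rule vanishing_at_nontrivial_roots[OF degree_twisted_square]) (rule vanish)
  then obtain u where u: "twisted_square a c = smult u (\<Sum>i<n. monom 1 i)" ..
  have "u \<noteq> 0"
    using poly_twisted_square[OF deg, of a 0] at_one u by auto
  fix t assume "t \<in> {..<n}"
  then have "coeff (twisted_square a c) t \<noteq> 0"
    using \<open>u \<noteq> 0\<close> by (simp add: u coeff_sum coeff_monom)
  show "t \<in> (\<lambda>(i, j). (i + a * j) mod n) ` (S \<times> S)"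
  proof (rule ccontr)
    assume "t \<notin> (\<lambda>(i, j). (i + a * j) mod n) ` (S \<times> S)"
    then have "coeff (twisted_square a c) t = 0"
      unfolding coeff_twisted_square S_def[symmetric] by (intro sum.neutral) auto
    with \<open>coeff (twisted_square a c) t \<noteq> 0\<close> show False
      by simp
  qed
qed

text \<open>Hence the weight $w$ of $c$ satisfies $n \le w^2$, and $n \le w^2 - w + 1$ when $a = n - 1$,
  because then every diagonal pair $(i, i)$ gives the residue $0$.\<close>
lemma hamming_wt_bound:
  fixes c :: "'b poly" and a :: nat
  assumes "degree c < n" "poly c 1 \<noteq> 0"
    and "\<And>m. 0 < m \<Longrightarrow> m < n \<Longrightarrow> poly c (theta ^ m) = 0 \<or> poly c (theta ^ (a * m)) = 0"
  shows "n \<le> hamming_wt n c ^ 2"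
    and "a = n - 1 \<Longrightarrow> n \<le> hamming_wt n c ^ 2 - hamming_wt n c + 1"
proof -
  define S where "S = {i. i < n \<and> coeff c i \<noteq> 0}"
  define f where "f = (\<lambda>(i, j). (i + a * j) mod n)"
  have "finite S"
    by (simp add: S_def)
  have "n \<le> card (f ` (S \<times> S))"
    using card_mono[OF _ support_sums_cover[OF assms]] \<open>finite S\<close> by (simp add: S_def f_def)
  moreover have w: "hamming_wt n c = card S"
    by (simp add: hamming_wt_def S_def)
  ultimately show "n \<le> hamming_wt n c ^ 2"
    using card_image_le[of "S \<times> S" f] \<open>finite S\<close>
    by (simp add: card_cartesian_product power2_eq_square)
  assume "a = n - 1"
  then have "f (i, i) = 0" for i
    using n_pos by (simp add: f_def algebra_simps)
  then have "card (f ` (S \<times> S)) \<le> card S * card S - card S + 1"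
    by (intro card_image_pairs_diagonal[OF \<open>finite S\<close>])
  with \<open>n \<le> card (f ` (S \<times> S))\<close> show "n \<le> hamming_wt n c ^ 2 - hamming_wt n c + 1"
    by (simp add: w power2_eq_square)
qed

end

subsection \<open>Cyclic codes\<close>

lemma degree_cyclic_modulus:
  "0 < n \<Longrightarrow> degree (monom 1 n - 1 :: 'a::comm_ring_1 poly) = n"
  using degree_add_eq_left[of "- 1" "monom (1 :: 'a) n"] by (simp add: degree_monom_eq)

lemma poly_vector_space: "vector_space (smult :: 'a::field \<Rightarrow> 'a poly \<Rightarrow> 'a poly)"
  by unfold_locales (simp_all add: smult_add_right smult_add_left)

lemma sum_smult_shifts:
  "(\<Sum>i\<in>I. smult (u i) (monom 1 i * G)) = (\<Sum>i\<in>I. monom (u i) i) * (G :: 'a::field poly)"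
  by (simp add: sum_distrib_right smult_monom flip: mult_smult_left)

lemma inj_shifts:
  assumes "G \<noteq> (0 :: 'a::field poly)"
  shows "inj (\<lambda>i. monom 1 i * G)"
proof -
  have "degree (monom 1 i * G) = i + degree G" for i
    using assms by (simp add: degree_mult_eq degree_monom_eq)
  then show ?thesis
    by (intro injI) (metis add_right_cancel)
qed

text \<open>The shifts $x^i G$ of a nonzero polynomial are linearly independent, since a vanishing
  combination $\sum_i u_i x^i G$ forces $\sum_i u_i x^i = 0$.\<close>
lemma shifts_independent:
  fixes G :: "'a::field poly"
  assumes "G \<noteq> 0"
  shows "\<not> module.dependent smult ((\<lambda>i. monom 1 i * G) ` I)"
proof
  interpret poly_vector_space: vector_space "smult :: 'a \<Rightarrow> 'a poly \<Rightarrow> 'a poly"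
    by (rule poly_vector_space)
  assume "poly_vector_space.dependent ((\<lambda>i. monom 1 i * G) ` I)"
  then obtain t u where t: "finite t" "t \<subseteq> (\<lambda>i. monom 1 i * G) ` I"
      "(\<Sum>v\<in>t. smult (u v) v) = 0" "\<exists>v\<in>t. u v \<noteq> 0"
    unfolding poly_vector_space.dependent_explicit by blast
  define J where "J = (\<lambda>i. monom 1 i * G) -` t"
  have t_J: "t = (\<lambda>i. monom 1 i * G) ` J"
    using t(2) by (auto simp: J_def)
  have "finite J"
    unfolding J_def using t(1) inj_shifts[OF assms] by (rule finite_vimageI)
  have "(\<Sum>i\<in>J. monom (u (monom 1 i * G)) i) * G = 0"
    using t(3) by (simp add: t_J sum.reindex[OF inj_on_subset[OF inj_shifts[OF assms]]]
        flip: sum_smult_shifts)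
  then have coeff_zero: "coeff (\<Sum>i\<in>J. monom (u (monom 1 i * G)) i) j = 0" for j
    using assms by simp
  obtain j where j: "j \<in> J" "u (monom 1 j * G) \<noteq> 0"
    using t(4) t_J by auto
  with \<open>finite J\<close> have "coeff (\<Sum>i\<in>J. monom (u (monom 1 i * G)) i) j = u (monom 1 j * G)"
    by (simp add: coeff_sum coeff_monom)
  with coeff_zero[of j] j(2) show False
    by simp
qed

text \<open>If $G$ divides $x^n - 1$, every codeword is $bG$ with $\deg b < n - \deg G$: reduce the
  multiplier modulo $(x^n - 1)/G$.\<close>
lemma cyclic_code_reduced_multiplier:
  fixes G :: "'a::field poly"
  assumes n: "0 < n" and G_dvd: "G dvd monom 1 n - 1" and c: "c \<in> cyclic_code n G"
  obtains b where "c = b * G" "b = 0 \<or> degree b < n - degree G"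
proof -
  define X :: "'a poly" where "X = monom 1 n - 1"
  obtain h where h: "X = G * h"
    using G_dvd by (auto simp: X_def elim: dvdE)
  have deg_X: "degree X = n"
    unfolding X_def by (rule degree_cyclic_modulus[OF n])
  then have "X \<noteq> 0"
    using n by auto
  then have "G \<noteq> 0" "h \<noteq> 0"
    using h by auto
  then have deg_h: "degree h = n - degree G"
    using h deg_X by (simp add: degree_mult_eq)
  obtain a where "c = (a * G) mod X"
    using c by (auto simp: cyclic_code_def X_def)
  then have "c = (a mod h) * G"
    by (simp add: h mod_mult_mult2 mult.commute)
  moreover have "a mod h = 0 \<or> degree (a mod h) < n - degree G"
    using degree_mod_less[OF \<open>h \<noteq> 0\<close>, of a] deg_h by auto
  ultimately show ?thesis
    by (rule that)
qed

text \<open>A generator $G$ dividing $x^n - 1$ generates a code of dimension $n - \deg G$: the shifts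
  $x^i G$, $i < n - \deg G$, form a basis.\<close>
lemma cyclic_code_dim:
  fixes G :: "'a::field poly"
  assumes n: "0 < n" and G_dvd: "G dvd monom 1 n - 1"
  shows "code_dim (cyclic_code n G) = n - degree G"
proof -
  interpret poly_vector_space: vector_space "smult :: 'a \<Rightarrow> 'a poly \<Rightarrow> 'a poly"
    by (rule poly_vector_space)
  define k where "k = n - degree G"
  define B where "B = (\<lambda>i. monom 1 i * G) ` {..<k}"
  have "G \<noteq> 0"
    using G_dvd degree_cyclic_modulus[OF n, where 'a='a] n by auto
  have "card B = k"
    unfolding B_def by (simp add: card_image inj_on_subset[OF inj_shifts[OF \<open>G \<noteq> 0\<close>]])
  moreover have "B \<subseteq> cyclic_code n G"
  proof
    fix v assume "v \<in> B"
    then obtain i where "i < k" "v = monom 1 i * G"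
      by (auto simp: B_def)
    moreover have "degree (monom 1 i * G) < degree (monom 1 n - 1 :: 'a poly)"
      using \<open>i < k\<close> \<open>G \<noteq> 0\<close> degree_cyclic_modulus[OF n, where 'a='a]
      by (simp add: degree_mult_eq degree_monom_eq k_def)
    ultimately show "v \<in> cyclic_code n G"
      unfolding cyclic_code_def by (auto intro!: exI[of _ "monom 1 i"] mod_poly_less[symmetric])
  qed
  moreover have "cyclic_code n G \<subseteq> poly_vector_space.span B"
  proof
    fix c assume "c \<in> cyclic_code n G"
    then obtain b where b: "c = b * G" "b = 0 \<or> degree b < k"
      unfolding k_def by (rule cyclic_code_reduced_multiplier[OF n G_dvd])
    then have "(\<Sum>i<k. monom (coeff b i) i) = b"
      by (intro poly_eqI) (auto simp: coeff_sum coeff_monom coeff_eq_0)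
    then have "c = (\<Sum>i<k. monom (coeff b i) i) * G"
      by (simp only: b(1))
    also have "\<dots> = (\<Sum>i<k. smult (coeff b i) (monom 1 i * G))"
      by (rule sum_smult_shifts[symmetric])
    also have "\<dots> \<in> poly_vector_space.span B"
      by (intro poly_vector_space.span_sum poly_vector_space.span_scale poly_vector_space.span_base)
        (auto simp: B_def)
    finally show "c \<in> poly_vector_space.span B" .
  qed
  moreover have "poly_vector_space.independent B"
    unfolding B_def by (rule shifts_independent[OF \<open>G \<noteq> 0\<close>])
  ultimately have "poly_vector_space.dim (cyclic_code n G) = k"
    by (intro poly_vector_space.dim_unique)
  then show ?thesis
    by (simp add: code_dim_def k_def)
qed

lemma cyclic_code_degree:
  assumes "0 < n" "c \<in> cyclic_code n (G :: 'a::field poly)"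
  shows "degree c < n"
proof -
  obtain a where c: "c = (a * G) mod (monom 1 n - 1)"
    using assms(2) by (auto simp: cyclic_code_def)
  have "monom 1 n - 1 \<noteq> (0 :: 'a poly)"
    using degree_cyclic_modulus[OF assms(1), where 'a='a] assms(1) by auto
  then show ?thesis
    using degree_mod_less[of "monom 1 n - 1" "a * G"] degree_cyclic_modulus[OF assms(1), where 'a='a]
      assms(1) c by auto
qed

lemma cyclic_code_dvd:
  assumes "G dvd monom 1 n - 1" "c \<in> cyclic_code n (G :: 'a::field poly)"
  shows "G dvd c"
  using assms by (auto simp: cyclic_code_def intro: dvd_mod)

lemma generator_in_cyclic_code:
  assumes "degree G < n"
  shows "G \<in> cyclic_code n (G :: 'a::field poly)"
proof -
  have "G = (1 * G) mod (monom 1 n - 1)"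
    using assms degree_cyclic_modulus[of n, where 'a='a] by (simp add: mod_poly_less)
  then show ?thesis
    unfolding cyclic_code_def by blast
qed

lemma min_odd_like_weight_attained:
  assumes "c \<in> C" "odd_like n c"
  shows "\<exists>c'\<in>C. odd_like n c' \<and> min_odd_like_weight n C = hamming_wt n c'"
proof -
  define W where "W = {hamming_wt n c | c. c \<in> C \<and> odd_like n c}"
  have "hamming_wt n c \<le> n" for c :: "'a poly"
    using card_mono[of "{..<n}" "{i. i < n \<and> coeff c i \<noteq> 0}"] by (auto simp: hamming_wt_def)
  then have "W \<subseteq> {..n}"
    by (auto simp: W_def)
  then have "finite W"
    by (rule finite_subset) simp
  moreover have "W \<noteq> {}"
    using assms by (auto simp: W_def)
  ultimately have "Min W \<in> W"
    by (rule Min_in)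
  then show ?thesis
    by (auto simp: W_def min_odd_like_weight_def)
qed

subsection \<open>Cyclic codes defined by a set of zeros\<close>

locale zeros_code = field_embedding emb + root_of_unity theta n
  for emb :: "'a::{field,finite} \<Rightarrow> 'b::{field,finite}" and theta :: 'b and n :: nat +
  fixes Z :: "nat set"
  assumes Z_sub: "Z \<subseteq> {1..<n}"
    and Z_closed: "\<And>k. k \<in> Z \<Longrightarrow> (CARD('a) * k) mod n \<in> Z"
begin

lemma finite_Z: "finite Z"
  using Z_sub finite_subset by blast

lemma inj_on_Z: "inj_on (\<lambda>k. theta ^ k) Z"
  by (rule inj_on_subset[OF theta_pow_inj]) (use Z_sub in auto)

lemma card_Z_less: "card Z < n"
  using card_mono[OF _ Z_sub] n_pos by simp

definition generator :: "'a poly" where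
  "generator = (SOME G. map_poly emb G = (\<Prod>k\<in>Z. [:- (theta ^ k), 1:]))"

lemma map_generator: "map_poly emb generator = (\<Prod>k\<in>Z. [:- (theta ^ k), 1:])"
proof -
  have closed: "(\<lambda>y. y ^ CARD('a)) ` (\<lambda>k. theta ^ k) ` Z \<subseteq> (\<lambda>k. theta ^ k) ` Z"
  proof clarify
    fix k assume "k \<in> Z"
    have "(theta ^ k) ^ CARD('a) = theta ^ ((CARD('a) * k) mod n)"
      by (simp add: mult.commute flip: power_mult theta_pow_mod)
    with Z_closed[OF \<open>k \<in> Z\<close>] show "(theta ^ k) ^ CARD('a) \<in> (\<lambda>k. theta ^ k) ` Z"
      by blast
  qed
  obtain G where "map_poly emb G = (\<Prod>a\<in>(\<lambda>k. theta ^ k) ` Z. [:- a, 1:])"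
    using root_product_descends[OF finite_imageI[OF finite_Z] closed] by (elim exE)
  then have "map_poly emb G = (\<Prod>k\<in>Z. [:- (theta ^ k), 1:])"
    unfolding prod.reindex[OF inj_on_Z] comp_def .
  then show ?thesis
    unfolding generator_def by (rule someI)
qed

lemma degree_generator: "degree generator = card Z"
  using map_generator degree_map_emb[of generator] by (simp add: degree_prod_eq_sum_degree)

lemma generator_dvd: "generator dvd monom 1 n - 1"
proof -
  have "map_poly emb (monom 1 n - 1) = (monom 1 n - 1 :: 'b poly)"
    by (simp add: map_poly_diff map_poly_monom map_zero map_one)
  moreover have "(\<Prod>k\<in>Z. [:- (theta ^ k), 1:]) dvd (monom 1 n - 1 :: 'b poly)"
    using finite_Z inj_on_Z by (intro linear_factors_dvd) (auto simp: poly_monom theta_pow_pow_n)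
  ultimately have "map_poly emb generator dvd map_poly emb (monom 1 n - 1)"
    by (simp only: map_generator)
  then show ?thesis
    by (simp only: map_emb_dvd_iff)
qed

lemma code_dim: "code_dim (cyclic_code n generator) = n - card Z"
  using cyclic_code_dim[OF n_pos generator_dvd] by (simp add: degree_generator)

lemma odd_like_iff_poly_one:
  assumes "degree c < n"
  shows "odd_like n c \<longleftrightarrow> poly (map_poly emb c) 1 \<noteq> 0"
proof -
  have "poly (map_poly emb c) 1 = emb (\<Sum>i<n. coeff c i)"
    using assms by (simp add: poly_as_sum_below degree_map_emb coeff_map map_sum)
  then show ?thesis
    by (simp add: odd_like_def emb_eq_0_iff)
qed

lemma hamming_wt_map: "hamming_wt n (map_poly emb c) = hamming_wt n c"
  by (simp add: hamming_wt_def coeff_map emb_eq_0_iff)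

lemma generator_odd_like: "odd_like n generator"
proof -
  have "theta ^ k \<noteq> 1" if "k \<in> Z" for k
    using theta_pow_neq_1 Z_sub that by auto
  then have "poly (map_poly emb generator) 1 \<noteq> 0"
    by (simp add: map_generator poly_prod finite_Z)
  then show ?thesis
    using card_Z_less by (simp add: odd_like_iff_poly_one degree_generator)
qed

lemma min_odd_like_weight_bound:
  assumes cover: "\<And>m. 0 < m \<Longrightarrow> m < n \<Longrightarrow> m \<in> Z \<or> (a * m) mod n \<in> Z"
  shows "n \<le> min_odd_like_weight n (cyclic_code n generator) ^ 2"
    and "a = n - 1 \<Longrightarrow> n \<le> min_odd_like_weight n (cyclic_code n generator) ^ 2
                              - min_odd_like_weight n (cyclic_code n generator) + 1"
proof -
  obtain c where c: "c \<in> cyclic_code n generator" "odd_like n c"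
    and min: "min_odd_like_weight n (cyclic_code n generator) = hamming_wt n c"
    using min_odd_like_weight_attained[OF generator_in_cyclic_code generator_odd_like]
      degree_generator card_Z_less by auto
  have deg: "degree (map_poly emb c) < n"
    using cyclic_code_degree[OF n_pos c(1)] by (simp add: degree_map_emb)
  have "map_poly emb generator dvd map_poly emb c"
    using cyclic_code_dvd[OF generator_dvd c(1)] by (simp add: map_emb_dvd_iff)
  then have zero: "poly (map_poly emb c) (theta ^ k) = 0" if "k \<in> Z" for k
    using that finite_Z by (auto simp: map_generator poly_prod elim!: dvdE)
  have roots: "poly (map_poly emb c) (theta ^ m) = 0 \<or> poly (map_poly emb c) (theta ^ (a * m)) = 0"
    if "0 < m" "m < n" for m
    using cover[OF that] zero theta_pow_mod[of "a * m"] by auto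
  have one: "poly (map_poly emb c) 1 \<noteq> 0"
    using c(2) cyclic_code_degree[OF n_pos c(1)] by (simp add: odd_like_iff_poly_one)
  show "n \<le> min_odd_like_weight n (cyclic_code n generator) ^ 2"
    using hamming_wt_bound(1)[OF deg one roots] by (simp add: min hamming_wt_map)
  show "a = n - 1 \<Longrightarrow> n \<le> min_odd_like_weight n (cyclic_code n generator) ^ 2
                              - min_odd_like_weight n (cyclic_code n generator) + 1"
    using hamming_wt_bound(2)[OF deg one roots] by (simp add: min hamming_wt_map)
qed

end

subsection \<open>Quadratic residues modulo an odd prime\<close>

lemma Legendre_cases: "Legendre a p \<in> {-1, 0, 1}"
  by (simp add: Legendre_def)

lemma Legendre_cong:
  assumes "[a = b] (mod p)"
  shows "Legendre a p = Legendre b p"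
proof -
  have "[a = 0] (mod p) \<longleftrightarrow> [b = 0] (mod p)" "QuadRes p a \<longleftrightarrow> QuadRes p b"
    using assms unfolding QuadRes_def by (meson cong_sym cong_trans)+
  then show ?thesis
    by (simp add: Legendre_def)
qed

lemma Legendre_unit:
  assumes "prime p" "\<not> p dvd x"
  shows "Legendre (int x) (int p) = 1 \<or> Legendre (int x) (int p) = -1"
  using assms Legendre_cases[of "int x" "int p"] by (auto simp: Legendre_def cong_0_iff)

text \<open>Numbers in $\{-1, 0, 1\}$ are determined by their residue modulo a prime $p > 2$; with
  Euler's criterion this yields the multiplicativity of the Legendre symbol and its values at
  primitive roots and at $-1$.\<close>
lemma small_cong_eq:
  fixes x y :: int
  assumes "2 < p" "x \<in> {-1, 0, 1}" "y \<in> {-1, 0, 1}" "[x = y] (mod int p)"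
  shows "x = y"
proof (rule ccontr)
  assume "x \<noteq> y"
  moreover have "\<bar>x - y\<bar> < int p"
    using assms(1-3) by auto
  moreover have "int p dvd x - y"
    using assms(4) by (simp add: cong_iff_dvd_diff)
  ultimately show False
    using dvd_imp_le_int[of "x - y" "int p"] by simp
qed

lemma Legendre_mult:
  assumes "prime p" "2 < p"
  shows "Legendre (a * b) (int p) = Legendre a (int p) * Legendre b (int p)"
proof -
  have euler: "[Legendre x (int p) = x ^ ((p - 1) div 2)] (mod int p)" for x
    using euler_criterion[OF assms] by simp
  have "[Legendre (a * b) (int p) = a ^ ((p - 1) div 2) * b ^ ((p - 1) div 2)] (mod int p)"
    using euler[of "a * b"] by (simp add: power_mult_distrib)
  also have "[a ^ ((p - 1) div 2) * b ^ ((p - 1) div 2) = Legendre a (int p) * Legendre b (int p)] (mod int p)"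
    by (intro cong_mult; rule cong_sym; rule euler)
  finally have "[Legendre (a * b) (int p) = Legendre a (int p) * Legendre b (int p)] (mod int p)" .
  moreover have "Legendre a (int p) * Legendre b (int p) \<in> {-1, 0, 1}"
    using Legendre_cases[of a "int p"] Legendre_cases[of b "int p"] by auto
  ultimately show ?thesis
    using small_cong_eq[OF assms(2) Legendre_cases] by blast
qed

lemma Legendre_one: "1 < p \<Longrightarrow> Legendre 1 p = 1"
  using QuadRes_def[of p 1] by (auto simp: Legendre_def cong_def intro: exI[of _ 1])

lemma Legendre_power:
  assumes "prime p" "2 < p"
  shows "Legendre (a ^ k) (int p) = Legendre a (int p) ^ k"
  using assms by (induction k) (simp_all add: Legendre_one Legendre_mult)

lemma Legendre_primroot:
  assumes "prime p" "2 < p" "residue_primroot p r"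
  shows "Legendre (int r) (int p) = -1"
proof -
  have ord: "ord p r = p - 1" and "coprime p r"
    using assms by (simp_all add: residue_primroot_def totient_prime)
  then have "\<not> p dvd r"
    using assms(1) by (metis coprime_common_divisor dvd_refl not_prime_unit)
  moreover have "Legendre (int r) (int p) \<noteq> 1"
  proof
    assume "Legendre (int r) (int p) = 1"
    then have "[int r ^ ((p - 1) div 2) = 1] (mod int p)"
      using euler_criterion[OF assms(1,2), of "int r"] by (metis cong_sym)
    then have "[r ^ ((p - 1) div 2) = 1] (mod p)"
      by (metis cong_int_iff of_nat_1 of_nat_power)
    then show False
      using ord_minimal[of "(p - 1) div 2" p r] assms(2) ord by auto
  qed
  ultimately show ?thesis
    using Legendre_unit[OF assms(1)] by blast
qed

lemma Legendre_minus_one: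
  assumes "prime p" "p mod 4 = 3"
  shows "Legendre (-1) (int p) = -1"
proof -
  have "2 < p"
    using assms(2) by (cases "p \<le> 2") (auto simp: le_Suc_eq)
  moreover have "odd ((p - 1) div 2)"
  proof -
    have "p = 4 * (p div 4) + 3"
      using assms(2) by (metis mod_mult_div_eq add.commute mult.commute)
    then have "(p - 1) div 2 = 2 * (p div 4) + 1"
      by linarith
    then show ?thesis
      by simp
  qed
  ultimately have "[Legendre (-1) (int p) = -1] (mod int p)"
    using euler_criterion[OF assms(1) \<open>2 < p\<close>, of "-1"] by simp
  then show ?thesis
    using small_cong_eq[OF \<open>2 < p\<close> Legendre_cases] by simp
qed

lemma card_swapped_halves:
  assumes "finite A" "A = B0 \<union> B1" "B0 \<inter> B1 = {}" "inj_on f A" "f ` B0 \<subseteq> B1" "f ` B1 \<subseteq> B0"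
  shows "card B0 = card A div 2" and "card B1 = card A div 2"
proof -
  have fin: "finite B0" "finite B1"
    using assms(1,2) by auto
  have "card B0 \<le> card B1" "card B1 \<le> card B0"
    using card_inj_on_le[OF inj_on_subset[OF assms(4)] assms(5) fin(2)]
      card_inj_on_le[OF inj_on_subset[OF assms(4)] assms(6) fin(1)] assms(2) by auto
  moreover have "card A = card B0 + card B1"
    using assms(2,3) fin by (simp add: card_Un_disjoint)
  ultimately show "card B0 = card A div 2" "card B1 = card A div 2"
    by simp_all
qed

lemma Dset_bounds: "x \<in> Dset p j \<Longrightarrow> 0 < x \<and> x < p"
  by (simp add: Dset_def)

text \<open>The sets $D_0^{(p)}$, $D_1^{(p)}$ of quadratic residues and nonresidues partition
  $\{1, \dots, p - 1\}$; multiplying by $r$ preserves or swaps them according to the quadratic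
  character of $r$, so each has $(p-1)/2$ elements.\<close>
lemma Dset_partition:
  assumes "prime p"
  shows "Dset p 0 \<union> Dset p 1 = {1..<p}" and "Dset p 0 \<inter> Dset p 1 = {}"
proof -
  have unit: "Legendre (int x) (int p) = 1 \<or> Legendre (int x) (int p) = -1" if "0 < x" "x < p" for x
  proof -
    have "\<not> p dvd x"
      using that by (auto dest: dvd_imp_le)
    then show ?thesis
      by (rule Legendre_unit[OF assms])
  qed
  show "Dset p 0 \<union> Dset p 1 = {1..<p}"
  proof
    show "{1..<p} \<subseteq> Dset p 0 \<union> Dset p 1"
    proof
      fix x assume "x \<in> {1..<p}"
      then have "0 < x" "x < p"
        by auto
      with unit[OF this] show "x \<in> Dset p 0 \<union> Dset p 1"
        by (auto simp: Dset_def)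
    qed
  qed (auto simp: Dset_def)
  show "Dset p 0 \<inter> Dset p 1 = {}"
    by (auto simp: Dset_def)
qed

lemma Dset_mult:
  assumes "prime p" "2 < p" "\<not> p dvd r" "x \<in> Dset p j" "j \<in> {0, 1}"
  shows "(r * x) mod p \<in> Dset p (if Legendre (int r) (int p) = 1 then j else 1 - j)"
proof -
  have x: "0 < x" "x < p" "Legendre (int x) (int p) = (if j = 0 then 1 else -1)"
    using assms(4) by (auto simp: Dset_def)
  then have "\<not> p dvd r * x"
    using assms(1,3) by (auto simp: prime_dvd_mult_iff dest: dvd_imp_le)
  then have "0 < (r * x) mod p"
    by (simp add: mod_greater_zero_iff_not_dvd)
  moreover have "Legendre (int ((r * x) mod p)) (int p) = Legendre (int r) (int p) * Legendre (int x) (int p)"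
    using Legendre_cong[of "int ((r * x) mod p)" "int (r * x)"] Legendre_mult[OF assms(1,2)]
    by (simp add: cong_def of_nat_mod)
  ultimately show ?thesis
    using Legendre_unit[OF assms(1,3)] x(3) assms(2,5) by (auto simp: Dset_def)
qed

lemma card_Dset:
  assumes "prime p" "2 < p" "residue_primroot p r" "j \<in> {0, 1}"
  shows "card (Dset p j) = (p - 1) div 2"
proof -
  have L_r: "Legendre (int r) (int p) = -1"
    by (rule Legendre_primroot[OF assms(1-3)])
  then have "\<not> p dvd r"
    using Legendre_unit[OF assms(1)] assms(1) by (auto simp: Legendre_def cong_0_iff)
  then have "coprime r p"
    using assms(1) by (simp add: prime_imp_coprime coprime_commute)
  define f where "f x = (r * x) mod p" for x
  have "inj_on f {1..<p}"
  proof (rule inj_onI)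
    fix x y assume "x \<in> {1..<p}" "y \<in> {1..<p}" "f x = f y"
    then show "x = y"
      using cong_mult_lcancel_nat[OF \<open>coprime r p\<close>, of x y] by (simp add: f_def cong_def)
  qed
  moreover have "f ` Dset p 0 \<subseteq> Dset p 1" "f ` Dset p 1 \<subseteq> Dset p 0"
    using Dset_mult[OF assms(1,2) \<open>\<not> p dvd r\<close>] L_r by (fastforce simp: f_def)+
  ultimately have "card (Dset p 0) = card {1..<p} div 2" "card (Dset p 1) = card {1..<p} div 2"
    using card_swapped_halves[OF _ Dset_partition(1)[OF assms(1), symmetric] Dset_partition(2)[OF assms(1)]]
    by auto
  then show ?thesis
    using assms(4) by auto
qed

subsection \<open>The residues modulo $n = n_1 n_2$\<close>

lemma coprime_prime_iff: "prime (p :: nat) \<Longrightarrow> coprime x p \<longleftrightarrow> \<not> p dvd x"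
proof
  assume "prime p" "coprime x p"
  then show "\<not> p dvd x"
    using coprime_common_divisor[of x p p] by auto
next
  assume "prime p" "\<not> p dvd x"
  then show "coprime x p"
    using prime_imp_coprime[of p x] by (simp add: coprime_commute)
qed


locale two_primes =
  fixes n1 n2 g1 g2 g nu :: nat
  assumes prime1: "prime n1" and prime2: "prime n2" and odd1: "odd n1" and odd2: "odd n2"
    and distinct: "n1 \<noteq> n2"
    and primroot1: "residue_primroot n1 g1" and primroot2: "residue_primroot n2 g2"
    and g_cong1: "[g = g1] (mod n1)" and g_cong2: "[g = g2] (mod n2)"
    and nu_cong1: "[nu = g] (mod n1)" and nu_cong2: "[nu = 1] (mod n2)"
begin

abbreviation (input) n where "n \<equiv> n1 * n2"
abbreviation (input) d where "d \<equiv> gcd (n1 - 1) (n2 - 1)"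
abbreviation (input) e where "e \<equiv> (n1 - 1) * (n2 - 1) div gcd (n1 - 1) (n2 - 1)"

abbreviation chi1 :: "nat \<Rightarrow> int" where "chi1 x \<equiv> Legendre (int x) (int n1)"
abbreviation chi2 :: "nat \<Rightarrow> int" where "chi2 x \<equiv> Legendre (int x) (int n2)"

lemma n1_gt_2: "2 < n1"
  using prime_ge_2_nat[OF prime1] odd1 by (cases "n1 = 2") auto

lemma n2_gt_2: "2 < n2"
  using prime_ge_2_nat[OF prime2] odd2 by (cases "n2 = 2") auto

lemma n_pos: "0 < n"
  using n1_gt_2 n2_gt_2 by simp

lemma coprime_n1: "coprime x n1 \<longleftrightarrow> \<not> n1 dvd x"
  and coprime_n2: "coprime x n2 \<longleftrightarrow> \<not> n2 dvd x"
  by (simp_all add: coprime_prime_iff prime1 prime2)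

lemma chi1_mod: "chi1 (x mod n) = chi1 x"
proof (rule Legendre_cong)
  have "[x mod n = x] (mod n1 * n2)"
    by (simp add: cong_def)
  then show "[int (x mod n) = int x] (mod int n1)"
    unfolding cong_int_iff by (rule cong_modulus_mult_nat)
qed

lemma chi_g: "chi1 g = -1" "chi2 g = -1"
  using Legendre_cong[of "int g" "int g1" "int n1"] Legendre_cong[of "int g" "int g2" "int n2"]
    Legendre_primroot[OF prime1 n1_gt_2 primroot1] Legendre_primroot[OF prime2 n2_gt_2 primroot2]
    g_cong1 g_cong2 by (simp_all add: cong_int_iff)

lemma chi_nu: "chi1 nu = -1" "chi2 nu = 1"
proof -
  show "chi1 nu = -1"
    using Legendre_cong[of "int nu" "int g" "int n1"] nu_cong1 chi_g by (simp add: cong_int_iff)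
  have "[int nu = int 1] (mod int n2)"
    using nu_cong2 by (simp only: cong_int_iff)
  then show "chi2 nu = 1"
    using n2_gt_2 by (simp add: Legendre_cong Legendre_one)
qed

lemma coprime_g: "coprime g n" and coprime_nu: "coprime nu n"
proof -
  have "\<not> n1 dvd g1" "\<not> n2 dvd g2"
    using primroot1 primroot2 by (simp_all add: residue_primroot_def coprime_prime_iff prime1 prime2
        coprime_commute)
  then have "\<not> n1 dvd g" "\<not> n2 dvd g" "\<not> n1 dvd nu" "\<not> n2 dvd nu"
    using cong_dvd_iff[OF g_cong1] cong_dvd_iff[OF g_cong2] cong_dvd_iff[OF nu_cong1]
      cong_dvd_iff[OF nu_cong2] n2_gt_2 by auto
  then show "coprime g n" "coprime nu n"
    by (simp_all add: coprime_n1 coprime_n2)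
qed

definition units :: "nat set" where
  "units = {x. x < n \<and> coprime x n}"

definition char_class :: "nat \<Rightarrow> nat set" where
  "char_class i = {x \<in> units. chi1 x = (if i = 0 then 1 else -1)}"

lemma card_units: "card units = (n1 - 1) * (n2 - 1)"
proof -
  have "units = totatives n"
    using n1_gt_2 n2_gt_2 by (auto simp: units_def totatives_def order.order_iff_strict intro!: Nat.gr0I)
  then show ?thesis
    using primes_coprime[OF prime1 prime2 distinct]
    by (simp add: totient_def [symmetric] totient_mult_coprime totient_prime prime1 prime2)
qed

lemma char_class_mult:
  assumes "coprime r n" "x \<in> char_class i" "i \<in> {0, 1}"
  shows "(r * x) mod n \<in> char_class (if chi1 r = 1 then i else 1 - i)"
proof -
  have "chi1 r = 1 \<or> chi1 r = -1"
    using assms(1) Legendre_unit[OF prime1] by (simp add: coprime_n1)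
  moreover have "coprime (r * x) n"
    using assms(1,2) by (simp add: char_class_def units_def)
  then have "coprime ((r * x) mod n) n"
    using n_pos by (subst coprime_mod_left_iff) simp_all
  ultimately show ?thesis
    using assms(2,3) n_pos
    by (auto simp: char_class_def units_def chi1_mod Legendre_mult[OF prime1 n1_gt_2])
qed

lemma char_class_partition: "char_class 0 \<union> char_class 1 = units" "char_class 0 \<inter> char_class 1 = {}"
  using Legendre_unit[OF prime1] by (auto simp: char_class_def units_def coprime_n1)

lemma card_char_class: "i \<in> {0, 1} \<Longrightarrow> card (char_class i) = (n1 - 1) * (n2 - 1) div 2"
proof -
  assume i: "i \<in> {0, 1}"
  define f where "f x = (g * x) mod n" for x
  have "inj_on f units"
    by (rule inj_onI) (auto simp: f_def units_def cong_def[symmetric] cong_mult_lcancel_nat[OF coprime_g]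
        cong_less_modulus_unique_nat)
  moreover have "f ` char_class 0 \<subseteq> char_class 1" "f ` char_class 1 \<subseteq> char_class 0"
    using char_class_mult[OF coprime_g] chi_g by (fastforce simp: f_def)+
  moreover have "finite units"
    by (simp add: units_def)
  ultimately have "card (char_class 0) = card units div 2" "card (char_class 1) = card units div 2"
    using card_swapped_halves[OF _ char_class_partition(1)[symmetric] char_class_partition(2)] by blast+
  then show ?thesis
    using i card_units by auto
qed

text \<open>Distinct exponent pairs $(s, k) \in [0, e) \times [0, d)$ give distinct residues
  $g^s \nu^k$: modulo $n_2$ the residue determines $s$ modulo $n_2 - 1$, modulo $n_1$ it
  determines $s + k$ modulo $n_1 - 1$; together these fix $k$ modulo $d$ and $s$ modulo
  $e = \mathrm{lcm}(n_1 - 1, n_2 - 1)$.\<close>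
lemma exponents_unique:
  assumes s: "s < e" "s' < e" and k: "k < d" "k' < d"
    and eq: "(g ^ s * nu ^ k) mod n = (g ^ s' * nu ^ k') mod n"
  shows "s = s' \<and> k = k'"
proof -
  have cong: "[g ^ s * nu ^ k = g ^ s' * nu ^ k'] (mod n1 * n2)"
    using eq by (simp add: cong_def)
  have mod2: "[g ^ s * nu ^ k = g2 ^ s] (mod n2)" for s k
    using cong_mult[OF cong_pow[OF g_cong2, of s] cong_pow[OF nu_cong2, of k]] by simp
  have mod1: "[g ^ s * nu ^ k = g1 ^ (s + k)] (mod n1)" for s k
    using cong_mult[OF cong_pow[OF g_cong1, of s] cong_pow[OF cong_trans[OF nu_cong1 g_cong1], of k]]
    by (simp add: power_add)
  have "[g2 ^ s = g2 ^ s'] (mod n2)"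
    using cong_modulus_mult_nat[OF cong[unfolded mult.commute[of n1]]] mod2
    by (meson cong_sym cong_trans)
  then have s_mod: "[s = s'] (mod n2 - 1)"
    using order_divides_expdiff[of n2 g2] primroot2 prime2
    by (simp add: residue_primroot_def totient_prime)
  have "[g1 ^ (s + k) = g1 ^ (s' + k')] (mod n1)"
    using cong_modulus_mult_nat[OF cong] mod1 by (meson cong_sym cong_trans)
  then have sk_mod: "[s + k = s' + k'] (mod n1 - 1)"
    using order_divides_expdiff[of n1 g1] primroot1 prime1
    by (simp add: residue_primroot_def totient_prime)
  have "[s + k = s + k'] (mod d)"
    using cong_trans[OF cong_dvd_modulus_nat[OF sk_mod gcd_dvd1]
        cong_add[OF cong_sym[OF cong_dvd_modulus_nat[OF s_mod gcd_dvd2]] cong_refl]] .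
  then have "[k = k'] (mod d)"
    by (simp only: cong_add_lcancel_nat)
  then have "k = k'"
    using k by (simp add: cong_def)
  then have "[s = s'] (mod lcm (n1 - 1) (n2 - 1))"
    using sk_mod s_mod by (simp add: cong_add_rcancel_nat cong_cong_lcm_nat)
  moreover have "lcm (n1 - 1) (n2 - 1) = e"
    by (simp add: lcm_nat_def)
  ultimately show ?thesis
    using s \<open>k = k'\<close> by (simp add: cong_def)
qed

lemma exponents_inj: "inj_on (\<lambda>(s, k). (g ^ s * nu ^ k) mod n) ({..<e} \<times> {..<d})"
  by (rule inj_onI) (use exponents_unique in auto)

lemma Vset_subset: "i \<in> {0, 1} \<Longrightarrow> Vset n g nu d e i \<subseteq> char_class i"
proof
  fix x assume i: "i \<in> {0, 1}" and "x \<in> Vset n g nu d e i"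
  then obtain s k where x: "x = (g ^ s * nu ^ k) mod n" and sk: "(s + k) mod 2 = i"
    by (auto simp: Vset_def)
  have "coprime (g ^ s * nu ^ k) n"
    using coprime_g coprime_nu by (simp del: coprime_mult_right_iff add: coprime_power_left_iff)
  then have "coprime x n"
    using n_pos by (simp del: coprime_mult_right_iff add: x)
  moreover have "chi1 x = (-1) ^ (s + k)"
    using chi_g chi_nu
    by (simp add: x chi1_mod Legendre_mult[OF prime1 n1_gt_2] Legendre_power[OF prime1 n1_gt_2] power_add)
  ultimately show "x \<in> char_class i"
    using sk i n_pos by (auto simp: char_class_def units_def x minus_one_power_iff)
qed

lemma Vset_union_image:
  "Vset n g nu d e 0 \<union> Vset n g nu d e 1 = (\<lambda>(s, k). (g ^ s * nu ^ k) mod n) ` ({..<e} \<times> {..<d})"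
proof (intro equalityI subsetI)
  fix x assume "x \<in> Vset n g nu d e 0 \<union> Vset n g nu d e 1"
  then show "x \<in> (\<lambda>(s, k). (g ^ s * nu ^ k) mod n) ` ({..<e} \<times> {..<d})"
    by (auto simp: Vset_def)
next
  fix x assume "x \<in> (\<lambda>(s, k). (g ^ s * nu ^ k) mod n) ` ({..<e} \<times> {..<d})"
  then obtain s k where x: "x = (g ^ s * nu ^ k) mod n" "s < e" "k < d"
    by auto
  have "x \<in> Vset n g nu d e ((s + k) mod 2)"
    unfolding x(1) Vset_def using x(2,3) by (intro CollectI exI[of _ s] exI[of _ k]) simp
  moreover have "(s + k) mod 2 = 0 \<or> (s + k) mod 2 = 1"
    by (simp add: mod2_eq_if)
  ultimately show "x \<in> Vset n g nu d e 0 \<union> Vset n g nu d e 1"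
    by (metis Un_iff)
qed

text \<open>Counting: the $e \cdot d$ residues $g^s \nu^k$ are distinct units and there are
  $(n_1 - 1)(n_2 - 1) = e d$ units, so $V_0 \cup V_1$ consists of all units.\<close>
lemma Vset_union: "Vset n g nu d e 0 \<union> Vset n g nu d e 1 = units"
proof -
  define phi where "phi = (\<lambda>(s, k). (g ^ s * nu ^ k) mod n)"
  have image: "Vset n g nu d e 0 \<union> Vset n g nu d e 1 = phi ` ({..<e} \<times> {..<d})"
    unfolding phi_def by (rule Vset_union_image)
  also have "\<dots> = units"
  proof (rule card_subset_eq)
    show "finite units"
      by (simp add: units_def)
    have "Vset n g nu d e 0 \<union> Vset n g nu d e 1 \<subseteq> char_class 0 \<union> char_class 1"
      using Vset_subset[of 0] Vset_subset[of 1] by (intro Un_mono) simp_all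
    then show "phi ` ({..<e} \<times> {..<d}) \<subseteq> units"
      by (simp only: image char_class_partition(1))
    have "card (phi ` ({..<e} \<times> {..<d})) = e * d"
      using exponents_inj by (simp add: phi_def card_image card_cartesian_product)
    also have "\<dots> = card units"
      by (simp add: card_units)
    finally show "card (phi ` ({..<e} \<times> {..<d})) = card units" .
  qed
  finally show ?thesis .
qed

lemma Vset_eq_char_class:
  assumes "i \<in> {0, 1}"
  shows "Vset n g nu d e i = char_class i"
proof
  show "Vset n g nu d e i \<subseteq> char_class i"
    by (rule Vset_subset[OF assms])
  show "char_class i \<subseteq> Vset n g nu d e i"
  proof
    fix x assume x: "x \<in> char_class i"
    then have "x \<in> Vset n g nu d e 0 \<union> Vset n g nu d e 1"
      using assms by (simp only: Vset_union flip: char_class_partition(1)) auto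
    then have "x \<in> Vset n g nu d e i \<or> x \<in> Vset n g nu d e (1 - i)"
      using assms by auto
    moreover have "x \<notin> char_class (1 - i)"
      using x char_class_partition(2) assms by auto
    ultimately show "x \<in> Vset n g nu d e i"
      using Vset_subset[of "1 - i"] assms by auto
  qed
qed

subsection \<open>The defining set of zeros\<close>

text \<open>The exponents $k$ of the zeros $\theta^k$ of $v_i(x) d_j^{(n_1)}(x) d_h^{(n_2)}(x)$.\<close>
definition zeros :: "nat \<Rightarrow> nat \<Rightarrow> nat \<Rightarrow> nat set" where
  "zeros i j h = char_class i \<union> (\<lambda>x. n2 * x) ` Dset n1 j \<union> (\<lambda>x. n1 * x) ` Dset n2 h"

lemma zeros_disjoint:
  "char_class i \<inter> (\<lambda>x. n2 * x) ` Dset n1 j = {}"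
  "(char_class i \<union> (\<lambda>x. n2 * x) ` Dset n1 j) \<inter> (\<lambda>x. n1 * x) ` Dset n2 h = {}"
proof -
  show "char_class i \<inter> (\<lambda>x. n2 * x) ` Dset n1 j = {}"
    by (auto simp: char_class_def units_def coprime_n2)
  have "n1 * y \<noteq> n2 * x" if "x \<in> Dset n1 j" for x y
  proof
    assume "n1 * y = n2 * x"
    then have "n1 dvd x"
      using primes_coprime[OF prime1 prime2 distinct]
      by (metis coprime_dvd_mult_right_iff dvd_triv_left)
    then show False
      using Dset_bounds[OF that] by (auto dest: dvd_imp_le)
  qed
  then show "(char_class i \<union> (\<lambda>x. n2 * x) ` Dset n1 j) \<inter> (\<lambda>x. n1 * x) ` Dset n2 h = {}"
    by (auto simp: char_class_def units_def coprime_n1)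
qed

lemma zeros_subset: "zeros i j h \<subseteq> {1..<n}"
proof -
  have "char_class i \<subseteq> {1..<n}"
    using n1_gt_2 by (auto simp: char_class_def units_def coprime_n1 Suc_le_eq intro: Nat.gr0I)
  moreover have "(\<lambda>x. n2 * x) ` Dset n1 j \<subseteq> {1..<n}" "(\<lambda>x. n1 * x) ` Dset n2 h \<subseteq> {1..<n}"
    using n1_gt_2 n2_gt_2 by (auto simp: Dset_def Suc_le_eq)
  ultimately show ?thesis
    by (simp add: zeros_def)
qed

lemma card_zeros:
  assumes "i \<in> {0, 1}" "j \<in> {0, 1}" "h \<in> {0, 1}"
  shows "card (zeros i j h) = (n1 - 1) * (n2 - 1) div 2 + (n1 - 1) div 2 + (n2 - 1) div 2"
proof -
  have "inj_on (\<lambda>x. n2 * x) (Dset n1 j)" "inj_on (\<lambda>x. n1 * x) (Dset n2 h)"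
    using n1_gt_2 n2_gt_2 by (auto simp: inj_on_def)
  then have "card (zeros i j h) = card (char_class i) + card (Dset n1 j) + card (Dset n2 h)"
    unfolding zeros_def using zeros_disjoint
    by (simp add: card_Un_disjoint card_image units_def char_class_def Dset_def)
  then show ?thesis
    using card_char_class[OF assms(1)] card_Dset[OF prime1 n1_gt_2 primroot1 assms(2)]
      card_Dset[OF prime2 n2_gt_2 primroot2 assms(3)] by simp
qed

lemma n_minus_card_zeros:
  "n - ((n1 - 1) * (n2 - 1) div 2 + (n1 - 1) div 2 + (n2 - 1) div 2) = (n + 1) div 2"
proof -
  obtain u v where "n1 = 2 * u + 1" "n2 = 2 * v + 1"
    using odd1 odd2 by (meson oddE)
  then show ?thesis
    by (simp add: algebra_simps)
qed

lemma mod_n_times_n2: "(r * (n2 * x)) mod n = n2 * ((r * x) mod n1)"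
  by (metis mod_mult_mult1 mult.commute mult.left_commute)

lemma mod_n_times_n1: "(r * (n1 * x)) mod n = n1 * ((r * x) mod n2)"
  by (metis mod_mult_mult1 mult.left_commute)

lemma zeros_closed:
  assumes "coprime r n" "chi1 r = 1" "chi2 r = 1" "i \<in> {0, 1}" "j \<in> {0, 1}" "h \<in> {0, 1}"
    and "k \<in> zeros i j h"
  shows "(r * k) mod n \<in> zeros i j h"
proof -
  have "\<not> n1 dvd r" "\<not> n2 dvd r"
    using assms(1) by (simp_all add: coprime_n1 coprime_n2)
  from assms(7) consider "k \<in> char_class i" | x where "x \<in> Dset n1 j" "k = n2 * x"
    | y where "y \<in> Dset n2 h" "k = n1 * y"
    unfolding zeros_def by blast
  then show ?thesis
  proof cases
    case 1
    then show ?thesis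
      using char_class_mult[OF assms(1) 1 assms(4)] assms(2) by (simp add: zeros_def)
  next
    case (2 x)
    then have "(r * x) mod n1 \<in> Dset n1 j"
      using Dset_mult[OF prime1 n1_gt_2 \<open>\<not> n1 dvd r\<close> _ assms(5)] assms(2) by simp
    then have "n2 * ((r * x) mod n1) \<in> (\<lambda>x. n2 * x) ` Dset n1 j"
      by (rule imageI)
    then show ?thesis
      using 2(2) by (simp add: mod_n_times_n2 zeros_def)
  next
    case (3 y)
    then have "(r * y) mod n2 \<in> Dset n2 h"
      using Dset_mult[OF prime2 n2_gt_2 \<open>\<not> n2 dvd r\<close> _ assms(6)] assms(3) by simp
    then have "n1 * ((r * y) mod n2) \<in> (\<lambda>x. n1 * x) ` Dset n2 h"
      by (rule imageI)
    then show ?thesis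
      using 3(2) by (simp add: mod_n_times_n1 zeros_def)
  qed
qed

lemma nonunit_residue:
  assumes "0 < k" "k < n" "\<not> coprime k n"
  obtains x where "k = n2 * x" "x \<in> {1..<n1}" | y where "k = n1 * y" "y \<in> {1..<n2}"
proof -
  consider "n2 dvd k" | "n1 dvd k"
    using assms(3) by (auto simp: coprime_n1 coprime_n2)
  then show ?thesis
  proof cases
    case 1
    then obtain x where "k = n2 * x"
      by (elim dvdE)
    moreover have "x \<in> {1..<n1}"
      using assms(1,2) calculation by (auto simp: Suc_le_eq mult.commute[of n1])
    ultimately show ?thesis
      using that(1) by blast
  next
    case 2
    then obtain y where "k = n1 * y"
      by (elim dvdE)
    moreover have "y \<in> {1..<n2}"
      using assms(1,2) calculation by (auto simp: Suc_le_eq)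
    ultimately show ?thesis
      using that(2) by blast
  qed
qed

lemma zeros_swap:
  assumes "coprime r n" "chi1 r = -1" "chi2 r = -1" "i \<in> {0, 1}" "j \<in> {0, 1}" "h \<in> {0, 1}"
    and "0 < k" "k < n"
  shows "k \<in> zeros i j h \<or> (r * k) mod n \<in> zeros i j h"
proof -
  have "\<not> n1 dvd r" "\<not> n2 dvd r"
    using assms(1) by (simp_all add: coprime_n1 coprime_n2)
  consider "coprime k n" | x where "k = n2 * x" "x \<in> {1..<n1}" | y where "k = n1 * y" "y \<in> {1..<n2}"
  proof (cases "coprime k n")
    case True
    then show ?thesis
      by (rule that(1))
  next
    case False
    show ?thesis
      by (rule nonunit_residue[OF assms(7,8) False]) (fact that(2), fact that(3))
  qed
  then show ?thesis
  proof cases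
    case 1
    then have "k \<in> units"
      using assms(8) by (simp add: units_def)
    then have "k \<in> char_class i \<or> k \<in> char_class (1 - i)"
      using char_class_partition(1) assms(4) by auto
    moreover have "(r * k) mod n \<in> char_class i" if "k \<in> char_class (1 - i)"
      using char_class_mult[OF assms(1) that] assms(2,4) by auto
    ultimately show ?thesis
      by (auto simp: zeros_def)
  next
    case (2 x)
    then have "x \<in> Dset n1 j \<or> x \<in> Dset n1 (1 - j)"
      using Dset_partition(1)[OF prime1] assms(5) by auto
    moreover have "n2 * ((r * x) mod n1) \<in> (\<lambda>x. n2 * x) ` Dset n1 j" if "x \<in> Dset n1 (1 - j)"
      using Dset_mult[OF prime1 n1_gt_2 \<open>\<not> n1 dvd r\<close> that] assms(2,5) by auto
    ultimately show ?thesis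
      using 2(1) by (auto simp: zeros_def mod_n_times_n2)
  next
    case (3 y)
    then have "y \<in> Dset n2 h \<or> y \<in> Dset n2 (1 - h)"
      using Dset_partition(1)[OF prime2] assms(6) by auto
    moreover have "n1 * ((r * y) mod n2) \<in> (\<lambda>x. n1 * x) ` Dset n2 h" if "y \<in> Dset n2 (1 - h)"
      using Dset_mult[OF prime2 n2_gt_2 \<open>\<not> n2 dvd r\<close> that] assms(3,6) by auto
    ultimately show ?thesis
      using 3(1) by (auto simp: zeros_def mod_n_times_n1)
  qed
qed

text \<open>$n - 1 \equiv -1$ is a nonsquare modulo $n_1$ and $n_2$ when both are $\equiv -1 \pmod 8$
  (in fact $\equiv 3 \pmod 4$ suffices).\<close>
lemma chi_n_minus_1:
  assumes "[int n1 = -1] (mod 8)" "[int n2 = -1] (mod 8)"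
  shows "chi1 (n - 1) = -1" "chi2 (n - 1) = -1"
proof -
  have minus_one: "Legendre (int (n - 1)) (int p) = -1" if "p \<in> {n1, n2}" "[int p = -1] (mod 8)" for p
  proof -
    have "[int (n - 1) = -1] (mod int p)"
      using that(1) n_pos by (auto simp: cong_iff_dvd_diff of_nat_diff)
    then have "Legendre (int (n - 1)) (int p) = Legendre (-1) (int p)"
      by (rule Legendre_cong)
    moreover have "[int p = -1] (mod 4)"
      using that(2) by (rule cong_dvd_modulus) simp
    then have "int (p mod 4) = 3"
      by (simp add: cong_def of_nat_mod)
    then have "p mod 4 = 3"
      by simp
    ultimately show ?thesis
      using Legendre_minus_one that(1) prime1 prime2 by auto
  qed
  show "chi1 (n - 1) = -1" "chi2 (n - 1) = -1"
    using minus_one assms by simp_all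
qed

lemma root_prod_zeros:
  "root_prod theta 1 (char_class i) * root_prod theta n2 (Dset n1 j) * root_prod theta n1 (Dset n2 h)
     = (\<Prod>k\<in>zeros i j h. [:- (theta ^ k), 1:])"
proof -
  have "inj_on (\<lambda>x. n2 * x) (Dset n1 j)" "inj_on (\<lambda>x. n1 * x) (Dset n2 h)"
    using n1_gt_2 n2_gt_2 by (auto simp: inj_on_def)
  moreover have "finite (char_class i)" "finite (Dset n1 j)" "finite (Dset n2 h)"
    by (simp_all add: char_class_def units_def Dset_def)
  ultimately show ?thesis
    unfolding root_prod_def zeros_def using zeros_disjoint
    by (simp add: prod.union_disjoint prod.reindex)
qed

end

lemma sqrt_le_of_le_square:
  fixes n m :: nat
  assumes "n \<le> m ^ 2"
  shows "sqrt (real n) \<le> real m"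
proof -
  have "sqrt (real n) \<le> sqrt (real m ^ 2)"
    using assms by (intro real_sqrt_le_mono) (simp flip: of_nat_power)
  then show ?thesis
    by simp
qed

subsection \<open>The codes $\mathcal{V}_{(i,j,h)}$\<close>

locale qr_setting = two_primes n1 n2 g1 g2 g nu + field_embedding emb
  for n1 n2 g1 g2 g nu :: nat and emb :: "'a::{field,finite} \<Rightarrow> 'b::{field,finite}" +
  fixes theta :: 'b
  assumes theta_primitive: "theta ^ (n1 * n2) = 1" "\<And>k. 0 < k \<Longrightarrow> k < n1 * n2 \<Longrightarrow> theta ^ k \<noteq> 1"
    and coprime_q: "coprime CARD('a) (n1 * n2)"
    and q_square: "chi1 CARD('a) = 1" "chi2 CARD('a) = 1"
begin

lemma zeros_code_instance:
  assumes "i \<in> {0, 1}" "j \<in> {0, 1}" "h \<in> {0, 1}"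
  shows "zeros_code emb theta n (zeros i j h)"
proof unfold_locales
  show "0 < n"
    by (rule n_pos)
  show "theta ^ n = 1" "\<And>k. 0 < k \<Longrightarrow> k < n \<Longrightarrow> theta ^ k \<noteq> 1"
    by (fact theta_primitive)+
  show "zeros i j h \<subseteq> {1..<n}"
    by (rule zeros_subset)
  show "(CARD('a) * k) mod n \<in> zeros i j h" if "k \<in> zeros i j h" for k
    by (rule zeros_closed[OF coprime_q q_square assms that])
qed

theorem qr_code_properties:
  assumes ijh: "i \<in> {0, 1}" "j \<in> {0, 1}" "h \<in> {0, 1}"
  shows "\<exists>G. map_poly emb G = root_prod theta 1 (Vset n g nu d e i)
                * root_prod theta n2 (Dset n1 j) * root_prod theta n1 (Dset n2 h)
           \<and> code_dim (cyclic_code n G) = (n + 1) div 2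
           \<and> sqrt (real n) \<le> real (min_odd_like_weight n (cyclic_code n G))
           \<and> ([int n1 = -1] (mod 8) \<and> [int n2 = -1] (mod 8) \<longrightarrow>
                (min_odd_like_weight n (cyclic_code n G))\<^sup>2 - min_odd_like_weight n (cyclic_code n G) + 1 \<ge> n)"
proof -
  interpret C: zeros_code emb theta n "zeros i j h"
    by (rule zeros_code_instance[OF ijh])
  let ?d = "min_odd_like_weight n (cyclic_code n C.generator)"
  have cover: "m \<in> zeros i j h \<or> (a * m) mod n \<in> zeros i j h"
    if "coprime a n" "chi1 a = -1" "chi2 a = -1" "0 < m" "m < n" for a m
    by (rule zeros_swap[OF that(1-3) ijh that(4,5)])
  have "map_poly emb C.generator = root_prod theta 1 (Vset n g nu d e i)
          * root_prod theta n2 (Dset n1 j) * root_prod theta n1 (Dset n2 h)"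
    unfolding C.map_generator Vset_eq_char_class[OF ijh(1)] root_prod_zeros ..
  moreover have "code_dim (cyclic_code n C.generator) = (n + 1) div 2"
    unfolding C.code_dim card_zeros[OF ijh] by (rule n_minus_card_zeros)
  moreover have "sqrt (real n) \<le> real ?d"
    by (rule sqrt_le_of_le_square[OF C.min_odd_like_weight_bound(1)[OF cover[OF coprime_g chi_g]]])
  moreover have "?d\<^sup>2 - ?d + 1 \<ge> n" if "[int n1 = -1] (mod 8)" "[int n2 = -1] (mod 8)"
  proof -
    have "coprime (n - 1) n"
      using n_pos by (rule coprime_diff_one_left_nat)
    with C.min_odd_like_weight_bound(2)[OF cover[OF _ chi_n_minus_1[OF that]]] show ?thesis
      by simp
  qed
  ultimately show ?thesis
    by blast
qed

end

theorem mainTheorem17: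
  fixes n1 n2 q N g1 g2 g nu :: nat
    and emb :: "'a::{field,finite} \<Rightarrow> 'b::{field,finite}"
    and theta :: 'b
  defines "n \<equiv> n1 * n2"
    and "d \<equiv> gcd (n1 - 1) (n2 - 1)"
    and "e \<equiv> (n1 - 1) * (n2 - 1) div gcd (n1 - 1) (n2 - 1)"
  assumes "prime n1" "prime n2" "odd n1" "odd n2" "n1 \<noteq> n2"
    and "card (UNIV :: 'a set) = q" "coprime q n"
    and "residue_primroot n1 g1" "residue_primroot n2 g2"
    and "g < n" "[g = g1] (mod n1)" "[g = g2] (mod n2)"
    and "nu < n" "[nu = g] (mod n1)" "[nu = 1] (mod n2)"
    and "N = ord n q"
    and "card (UNIV :: 'b set) = q ^ N"
    and "inj emb" "emb 1 = 1" "\<And>x y. emb (x + y) = emb x + emb y" "\<And>x y. emb (x * y) = emb x * emb y"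
    and "theta ^ n = 1" "\<And>k. 0 < k \<Longrightarrow> k < n \<Longrightarrow> theta ^ k \<noteq> 1"
    and "q mod n \<in> Vset n g nu d e 0"
    and "Legendre (int q) (int n1) = 1" "Legendre (int q) (int n2) = 1"
  shows "\<forall>i\<in>{0,1}. \<forall>j\<in>{0,1}. \<forall>h\<in>{0,1}.
           \<exists>G :: 'a poly.
             map_poly emb G = root_prod theta 1 (Vset n g nu d e i)
                              * root_prod theta n2 (Dset n1 j) * root_prod theta n1 (Dset n2 h)
           \<and> code_dim (cyclic_code n G) = (n + 1) div 2
           \<and> sqrt (real n) \<le> real (min_odd_like_weight n (cyclic_code n G))
           \<and> ([int n1 = -1] (mod 8) \<and> [int n2 = -1] (mod 8) \<longrightarrow>
                (min_odd_like_weight n (cyclic_code n G))\<^sup>2 - min_odd_like_weight n (cyclic_code n G) + 1 \<ge> n)"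
proof -
  interpret qr_setting n1 n2 g1 g2 g nu emb theta
  proof unfold_locales
    show "theta ^ (n1 * n2) = 1" "coprime CARD('a) (n1 * n2)"
      "Legendre (int CARD('a)) (int n1) = 1" "Legendre (int CARD('a)) (int n2) = 1"
      using assms(9,10,25,28,29) unfolding assms(1) by simp_all
    show "theta ^ k \<noteq> 1" if "0 < k" "k < n1 * n2" for k
      using assms(26) that unfolding assms(1) by blast
  qed fact+
  show ?thesis
    using qr_code_properties unfolding assms(1-3) by blast
qed

end
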